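(* Let $\underline A=(A_1,\dots,A_m)\in{\rm Mat}(d,\mathbb{R})^m$ and $1\le k\le d$, and assume (1) $\mathrm{rank}(A_j)=k$ for all $j$, and (2) $\mathrm{rank}(A_aA_b)=k$ for every $a,b\in\{1,\dots,m\}$. For $1\le l\le m$ let $R_l:=\mathrm{Range}(A_l)$. Then for every $n\in\mathbb N$ and $i_1,\dots,i_n\in\{1,\dots,m\}$, the restriction $A_lA_{i_1}\cdots A_{i_n}|_{R_l}:R_l\to R_l$ is a linear isomorphism. Let $\mathcal G_l\subseteq\mathrm{GL}(R_l)$ be the group generated by all these automorphisms of $R_l$. Then: (a) for all $1\le i,j\le m$ the groups $\mathcal G_i$ and $\mathcal G_j$ are conjugate; (b) if some $\mathcal G_l$ is Zariski dense in $\mathrm{GL}(R_l)$, then $\wedge_i\underline A$ is irreducible for all $1\le i\le k$.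
   Context: $\wedge_iA$ denotes the $i$-th exterior power of a matrix $A$ (the matrix of its $i\times i$ minors) and $\wedge_i\underline A=(\wedge_iA_1,\dots,\wedge_iA_m)$. A tuple $(D_1,\dots,D_m)$ of $N\times N$ real matrices is called reducible if there exist subspaces $V_1,\dots,V_m$ with $\{0\}\ne V_j\subsetneq\mathrm{Range}(D_j)$ and $D_aV_b=V_a$ for all $a,b\in\{1,\dots,m\}$; otherwise it is irreducible. *)

theory Defs
  imports "HOL-Analysis.Analysis" "HOL-Algebra.Generated_Groups"
begin

text \<open>A matrix on a finite index set S is a function D :: 'i => 'i => real (entry D r c);
  vectors are functions 'i => real vanishing outside S.\<close>

definition fvecs :: "'i set \<Rightarrow> ('i \<Rightarrow> real) set" where
  "fvecs S = {v. \<forall>x. x \<notin> S \<longrightarrow> v x = 0}"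

definition mv :: "'i set \<Rightarrow> ('i \<Rightarrow> 'i \<Rightarrow> real) \<Rightarrow> ('i \<Rightarrow> real) \<Rightarrow> ('i \<Rightarrow> real)" where
  "mv S D v = (\<lambda>r. if r \<in> S then (\<Sum>c\<in>S. D r c * v c) else 0)"

definition fsubspace :: "'i set \<Rightarrow> ('i \<Rightarrow> real) set \<Rightarrow> bool" where
  "fsubspace S V \<longleftrightarrow> V \<subseteq> fvecs S \<and> (\<lambda>_. 0) \<in> V
     \<and> (\<forall>u\<in>V. \<forall>w\<in>V. (\<lambda>x. u x + w x) \<in> V)
     \<and> (\<forall>c::real. \<forall>u\<in>V. (\<lambda>x. c * u x) \<in> V)"

definition mrange :: "'i set \<Rightarrow> ('i \<Rightarrow> 'i \<Rightarrow> real) \<Rightarrow> ('i \<Rightarrow> real) set" where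
  "mrange S D = mv S D ` fvecs S"

definition reducible_tuple :: "'i set \<Rightarrow> nat \<Rightarrow> (nat \<Rightarrow> 'i \<Rightarrow> 'i \<Rightarrow> real) \<Rightarrow> bool" where
  "reducible_tuple S m D \<longleftrightarrow> (\<exists>V :: nat \<Rightarrow> ('i \<Rightarrow> real) set.
      (\<forall>j\<in>{1..m}. fsubspace S (V j) \<and> V j \<noteq> {\<lambda>_. 0} \<and> V j \<subset> mrange S (D j))
    \<and> (\<forall>a\<in>{1..m}. \<forall>b\<in>{1..m}. mv S (D a) ` V b = V a))"

definition irreducible_tuple :: "'i set \<Rightarrow> nat \<Rightarrow> (nat \<Rightarrow> 'i \<Rightarrow> 'i \<Rightarrow> real) \<Rightarrow> bool" where
  "irreducible_tuple S m D \<longleftrightarrow> \<not> reducible_tuple S m D"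

text \<open>A fixed enumeration of the finite index type, used to order the rows/columns
  of each minor.  (Irreducibility does not depend on this choice.)\<close>
definition dord :: "'d::finite \<Rightarrow> nat" where
  "dord = (SOME f. bij_betw f (UNIV :: 'd set) {..<CARD('d)})"

definition ilist :: "'d::finite set \<Rightarrow> 'd list" where
  "ilist I = map (inv_into UNIV dord) (sorted_list_of_set (dord ` I))"

definition ldet :: "nat \<Rightarrow> (nat \<Rightarrow> nat \<Rightarrow> real) \<Rightarrow> real" where
  "ldet n M = sum (\<lambda>p. of_int (sign p) * prod (\<lambda>r. M r (p r)) {..<n}) {p. p permutes {..<n}}"

definition ext_idx :: "nat \<Rightarrow> 'd::finite set set" where
  "ext_idx i = {I. card I = i}"

definition ext_pow :: "nat \<Rightarrow> real^'d^'d \<Rightarrow> 'd::finite set \<Rightarrow> 'd set \<Rightarrow> real" where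
  "ext_pow i A = (\<lambda>I J. ldet i (\<lambda>r c. A $ (ilist I ! r) $ (ilist J ! c)))"

text \<open>Elements of GL(R) are represented by their restrictions to R.\<close>
definition GLs :: "(real^'n) set \<Rightarrow> (real^'n \<Rightarrow> real^'n) monoid" where
  "GLs R = \<lparr> carrier = {f. \<exists>g. linear g \<and> bij_betw g R R \<and> f = restrict g R},
             mult = (\<lambda>f g. restrict (f \<circ> g) R),
             one = restrict id R \<rparr>"

text \<open>Polynomial functions on End(R): the algebra generated by constants and the
  coordinate functionals f |-> (f v)_j, v in R.\<close>
inductive_set polyfun :: "(real^'n) set \<Rightarrow> ((real^'n \<Rightarrow> real^'n) \<Rightarrow> real) set"
  for R where
  const: "(\<lambda>f. c) \<in> polyfun R"
| coord: "v \<in> R \<Longrightarrow> (\<lambda>f. f v $ j) \<in> polyfun R"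
| add: "p \<in> polyfun R \<Longrightarrow> q \<in> polyfun R \<Longrightarrow> (\<lambda>f. p f + q f) \<in> polyfun R"
| mult: "p \<in> polyfun R \<Longrightarrow> q \<in> polyfun R \<Longrightarrow> (\<lambda>f. p f * q f) \<in> polyfun R"

definition zariski_dense_GL :: "(real^'n) set \<Rightarrow> (real^'n \<Rightarrow> real^'n) set \<Rightarrow> bool" where
  "zariski_dense_GL R G \<longleftrightarrow>
     (\<forall>p\<in>polyfun R. (\<forall>g\<in>G. p g = 0) \<longrightarrow> (\<forall>g\<in>carrier (GLs R). p g = 0))"

definition word :: "(nat \<Rightarrow> real^'n^'n) \<Rightarrow> nat \<Rightarrow> nat list \<Rightarrow> real^'n^'n" where
  "word A l ws = foldl (**) (A l) (map A ws)"

definition Rg :: "(nat \<Rightarrow> real^'n^'n) \<Rightarrow> nat \<Rightarrow> (real^'n) set" where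
  "Rg A l = range (\<lambda>x. A l *v x)"

definition Ggrp :: "nat \<Rightarrow> (nat \<Rightarrow> real^'n^'n) \<Rightarrow> nat \<Rightarrow> (real^'n \<Rightarrow> real^'n) set" where
  "Ggrp m A l = generate (GLs (Rg A l))
     {restrict (\<lambda>x. word A l ws *v x) (Rg A l) | ws. set ws \<subseteq> {1..m}}"

end

theory Submission
  imports Defs "HOL-Computational_Algebra.Polynomial"
begin

text \<open>
  The rank conditions make each \<open>A\<^sub>a\<close> map \<open>R\<^sub>b\<close> bijectively onto \<open>R\<^sub>a\<close>, so every word
  \<open>A\<^sub>l A\<^sub>i\<^sub>1 \<dots> A\<^sub>i\<^sub>n\<close> restricts to an automorphism of \<open>R\<^sub>l\<close>. For (a), let
  \<open>\<phi> = A\<^sub>j\<close> restricted to \<open>R\<^sub>i \<rightarrow> R\<^sub>j\<close>. For a word \<open>W\<close>,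
  \<open>\<phi> (A\<^sub>i W) \<phi>\<^sup>-\<^sup>1 \<cdot> (A\<^sub>j A\<^sub>i) = A\<^sub>j A\<^sub>i W A\<^sub>i\<close> on \<open>R\<^sub>j\<close> and
  \<open>\<phi> (A\<^sub>i A\<^sub>j) \<phi>\<^sup>-\<^sup>1 \<cdot> (A\<^sub>j W) = \<phi> (A\<^sub>i A\<^sub>j W A\<^sub>j) \<phi>\<^sup>-\<^sup>1\<close>, so conjugation by \<open>\<phi>\<close> maps the
  generators of \<open>\<G>\<^sub>i\<close> into \<open>\<G>\<^sub>j\<close> and vice versa.

  For (b), a reduction \<open>(V\<^sub>1, \<dots>, V\<^sub>m)\<close> of \<open>\<wedge>\<^sub>i A\<close> yields a nonzero proper subspace \<open>V\<^sub>l\<close>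
  of \<open>\<wedge>\<^sub>i R\<^sub>l = Range (\<wedge>\<^sub>i A\<^sub>l)\<close> invariant under \<open>\<wedge>\<^sub>i\<close> of every word, hence under
  \<open>\<wedge>\<^sub>i g\<close> for \<open>g \<in> \<G>\<^sub>l\<close>. Invariance is a system of polynomial equations in \<open>g\<close>, so Zariski
  density extends it to \<open>GL(R\<^sub>l)\<close> and then to every endomorphism of \<open>R\<^sub>l\<close>. A rank-one
  endomorphism sends a nonzero vector of \<open>V\<^sub>l\<close> to a nonzero multiple of any prescribed
  \<open>x\<^sub>1 \<and> \<dots> \<and> x\<^sub>i\<close> with \<open>x\<^sub>c \<in> R\<^sub>l\<close>, so \<open>V\<^sub>l = \<wedge>\<^sub>i R\<^sub>l\<close>, a contradiction. That \<open>\<wedge>\<^sub>i\<close> acts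
  functorially on such wedges is the Cauchy--Binet formula.
\<close>

section \<open>Determinants and the Cauchy--Binet formula\<close>

lemma ldet_cong:
  assumes "\<And>r c. r < n \<Longrightarrow> c < n \<Longrightarrow> M r c = M' r c"
  shows "ldet n M = ldet n M'"
  unfolding ldet_def
proof (rule sum.cong[OF refl])
  fix p assume "p \<in> {p. p permutes {..<n}}"
  hence p: "p permutes {..<n}" by simp
  show "of_int (sign p) * (\<Prod>r<n. M r (p r)) = of_int (sign p) * (\<Prod>r<n. M' r (p r))"
    using assms permutes_in_image[OF p] by (auto intro!: prod.cong)
qed

lemma ldet_permute_rows:
  assumes p: "p permutes {..<n}"
  shows "ldet n (\<lambda>r c. M (p r) c) = of_int (sign p) * ldet n M"
proof -
  let ?P = "{q. q permutes {..<n}}"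
  have "ldet n (\<lambda>r c. M (p r) c) = (\<Sum>q\<in>?P. of_int (sign (q \<circ> p)) * (\<Prod>r<n. M (p r) ((q \<circ> p) r)))"
    unfolding ldet_def by (rule sum_permutations_compose_right[OF p])
  also have "\<dots> = (\<Sum>q\<in>?P. of_int (sign p) * (of_int (sign q) * (\<Prod>r<n. M r (q r))))"
  proof (rule sum.cong[OF refl])
    fix q assume "q \<in> ?P"
    hence q: "q permutes {..<n}" by simp
    have "(\<Prod>r<n. M r (q r)) = (\<Prod>r\<in>p ` {..<n}. M r (q r))"
      by (simp only: permutes_image[OF p])
    also have "\<dots> = (\<Prod>r<n. M (p r) ((q \<circ> p) r))"
      by (simp add: prod.reindex[OF permutes_inj_on[OF p]])
    finally have "(\<Prod>r<n. M (p r) ((q \<circ> p) r)) = (\<Prod>r<n. M r (q r))" ..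
    moreover have "sign (q \<circ> p) = sign q * sign p"
      using sign_compose permutation_permutes q p by (metis finite_lessThan)
    ultimately show "of_int (sign (q \<circ> p)) * (\<Prod>r<n. M (p r) ((q \<circ> p) r)) =
        of_int (sign p) * (of_int (sign q) * (\<Prod>r<n. M r (q r)))" by simp
  qed
  also have "\<dots> = of_int (sign p) * ldet n M" by (simp add: ldet_def sum_distrib_left)
  finally show ?thesis .
qed

lemma ldet_eq_0_if_equal_rows:
  assumes "a < n" "b < n" "a \<noteq> b" "M a = M b"
  shows "ldet n M = 0"
proof -
  let ?t = "Transposition.transpose a b"
  have t: "?t permutes {..<n}" using assms by (simp add: permutes_swap_id)
  have "(\<lambda>r c. M (?t r) c) = M"
  proof (intro ext)
    fix r c show "M (?t r) c = M r c"
      using assms(4) by (cases "r = a"; cases "r = b") auto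
  qed
  hence "ldet n M = - ldet n M"
    using ldet_permute_rows[OF t, of M] assms(3) by (simp add: sign_swap_id)
  thus ?thesis by simp
qed

lemma ldet_eq_0_if_not_inj_rows:
  assumes "\<not> inj_on f {..<n}"
  shows "ldet n (\<lambda>r c. Q (f r) c) = 0"
proof -
  obtain a b where "a < n" "b < n" "a \<noteq> b" "f a = f b"
    using assms unfolding inj_on_def by auto
  thus ?thesis by (intro ldet_eq_0_if_equal_rows[of a n b]) auto
qed

text \<open>Expand by multilinearity in the rows; the terms with a repeated row vanish.\<close>
lemma ldet_sum_rows:
  assumes "finite T"
  shows "ldet n (\<lambda>r c. \<Sum>t\<in>T. P r t * Q t c)
     = (\<Sum>f | f \<in> PiE {..<n} (\<lambda>_. T) \<and> inj_on f {..<n}.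
          (\<Prod>r<n. P r (f r)) * ldet n (\<lambda>r c. Q (f r) c))"
proof -
  let ?P = "{p. p permutes {..<n}}" and ?F = "PiE {..<n} (\<lambda>_. T)"
  have "ldet n (\<lambda>r c. \<Sum>t\<in>T. P r t * Q t c)
      = (\<Sum>p\<in>?P. of_int (sign p) * (\<Sum>f\<in>?F. \<Prod>r<n. P r (f r) * Q (f r) (p r)))"
    unfolding ldet_def using assms by (simp add: prod_sum_PiE)
  also have "\<dots> = (\<Sum>f\<in>?F. \<Sum>p\<in>?P. (\<Prod>r<n. P r (f r)) * (of_int (sign p) * (\<Prod>r<n. Q (f r) (p r))))"
    by (subst sum.swap) (simp add: sum_distrib_left prod.distrib algebra_simps)
  also have "\<dots> = (\<Sum>f\<in>?F. (\<Prod>r<n. P r (f r)) * ldet n (\<lambda>r c. Q (f r) c))"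
    by (simp add: ldet_def sum_distrib_left)
  also have "\<dots> = (\<Sum>f | f \<in> ?F \<and> inj_on f {..<n}. (\<Prod>r<n. P r (f r)) * ldet n (\<lambda>r c. Q (f r) c))"
    using assms by (intro sum.mono_neutral_right) (auto simp: ldet_eq_0_if_not_inj_rows finite_PiE)
  finally show ?thesis .
qed

text \<open>The injective maps \<open>{..<n} \<rightarrow> set L\<close> are exactly the \<open>r \<mapsto> L ! p r\<close> with \<open>p\<close> a permutation.\<close>
lemma sum_inj_PiE_eq_sum_permutes:
  assumes L: "distinct L" "length L = n"
  shows "(\<Sum>f | f \<in> PiE {..<n} (\<lambda>_. set L) \<and> inj_on f {..<n}. F f)
       = (\<Sum>p\<in>{p. p permutes {..<n}}. F (restrict (\<lambda>r. L ! p r) {..<n}))"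
proof -
  let ?pos = "the_inv_into {..<n} ((!) L)"
  have bij: "bij_betw ((!) L) {..<n} (set L)" using bij_betw_nth L by blast
  show ?thesis
  proof (rule sum.reindex_bij_witness[where i = "\<lambda>p. restrict (\<lambda>r. L ! p r) {..<n}"
        and j = "\<lambda>f r. if r < n then ?pos (f r) else r"])
    fix f assume "f \<in> {f. f \<in> PiE {..<n} (\<lambda>_. set L) \<and> inj_on f {..<n}}"
    hence f: "f \<in> PiE {..<n} (\<lambda>_. set L)" "inj_on f {..<n}" by auto
    let ?p = "\<lambda>r. if r < n then ?pos (f r) else r"
    have fL: "r < n \<Longrightarrow> f r \<in> set L" for r using f(1) by auto
    have pos: "L ! ?pos x = x" "?pos x < n" if "x \<in> set L" for x
      using f_the_inv_into_f_bij_betw[OF bij] bij_betw_apply[OF bij_betw_the_inv_into[OF bij]] that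
      by auto
    show inv: "restrict (\<lambda>r. L ! ?p r) {..<n} = f"
      using f(1) fL pos by (auto simp: fun_eq_iff PiE_def extensional_def)
    have "inj_on ?p {..<n}"
    proof (rule inj_onI)
      fix r s assume "r \<in> {..<n}" "s \<in> {..<n}" "?p r = ?p s"
      hence "f r = f s" using pos fL by (metis lessThan_iff)
      thus "r = s" using f(2) \<open>r \<in> {..<n}\<close> \<open>s \<in> {..<n}\<close> by (simp add: inj_on_eq_iff)
    qed
    thus "?p \<in> {p. p permutes {..<n}}"
      using pos fL by (auto intro!: inj_imp_permutes split: if_splits)
    show "F (restrict (\<lambda>r. L ! ?p r) {..<n}) = F f" by (simp only: inv)
  next
    fix p assume "p \<in> {p. p permutes {..<n}}"
    hence p: "p permutes {..<n}" by simp
    have lt: "r < n \<Longrightarrow> p r < n" for r using permutes_in_image[OF p] by simp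
    show "(\<lambda>r. if r < n then ?pos (restrict (\<lambda>r. L ! p r) {..<n} r) else r) = p"
      using lt permutes_not_in[OF p] the_inv_into_f_f[OF bij_betw_imp_inj_on[OF bij]]
      by (auto simp: fun_eq_iff)
    show "restrict (\<lambda>r. L ! p r) {..<n} \<in> {f. f \<in> PiE {..<n} (\<lambda>_. set L) \<and> inj_on f {..<n}}"
    proof -
      have "inj_on (\<lambda>r. L ! p r) {..<n}"
        using comp_inj_on[OF permutes_inj_on[OF p], of "(!) L"] bij_betw_imp_inj_on[OF bij]
        by (simp add: permutes_image[OF p] o_def)
      thus ?thesis using L lt by (simp add: inj_on_def)
    qed
  qed
qed

lemma sum_inj_rows_eq_ldet_mult:
  assumes L: "distinct L" "length L = n"
  shows "(\<Sum>f | f \<in> PiE {..<n} (\<lambda>_. set L) \<and> inj_on f {..<n}.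
            (\<Prod>r<n. P r (f r)) * ldet n (\<lambda>r c. Q (f r) c))
       = ldet n (\<lambda>r c. P r (L ! c)) * ldet n (\<lambda>r c. Q (L ! r) c)"
  (is "?lhs = _")
proof -
  let ?P = "{p. p permutes {..<n}}"
  have "?lhs = (\<Sum>p\<in>?P. (\<Prod>r<n. P r (restrict (\<lambda>r. L ! p r) {..<n} r))
                        * ldet n (\<lambda>r c. Q (restrict (\<lambda>r. L ! p r) {..<n} r) c))"
    by (rule sum_inj_PiE_eq_sum_permutes[OF L])
  also have "\<dots> = (\<Sum>p\<in>?P. of_int (sign p) * (\<Prod>r<n. P r (L ! p r)) * ldet n (\<lambda>r c. Q (L ! r) c))"
  proof (rule sum.cong[OF refl])
    fix p assume "p \<in> ?P"
    hence p: "p permutes {..<n}" by simp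
    have "ldet n (\<lambda>r c. Q (restrict (\<lambda>r. L ! p r) {..<n} r) c) = ldet n (\<lambda>r c. Q (L ! p r) c)"
      by (rule ldet_cong) simp
    thus "(\<Prod>r<n. P r (restrict (\<lambda>r. L ! p r) {..<n} r))
            * ldet n (\<lambda>r c. Q (restrict (\<lambda>r. L ! p r) {..<n} r) c)
        = of_int (sign p) * (\<Prod>r<n. P r (L ! p r)) * ldet n (\<lambda>r c. Q (L ! r) c)"
      using ldet_permute_rows[OF p, of "\<lambda>r c. Q (L ! r) c"] by simp
  qed
  also have "\<dots> = ldet n (\<lambda>r c. P r (L ! c)) * ldet n (\<lambda>r c. Q (L ! r) c)"
    by (simp add: ldet_def sum_distrib_right)
  finally show ?thesis .
qed

lemma ldet_mult:
  "ldet n (\<lambda>r c. \<Sum>s<n. P r s * Q s c) = ldet n P * ldet n Q"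
proof -
  have "ldet n (\<lambda>r c. \<Sum>s<n. P r s * Q s c)
      = ldet n (\<lambda>r c. P r ([0..<n] ! c)) * ldet n (\<lambda>r c. Q ([0..<n] ! r) c)"
    using ldet_sum_rows[of "{..<n}" n P Q] sum_inj_rows_eq_ldet_mult[of "[0..<n]" n P Q]
    by (simp add: atLeast0LessThan)
  also have "\<dots> = ldet n P * ldet n Q"
    by (intro arg_cong2[where f = "(*)"] ldet_cong) simp_all
  finally show ?thesis .
qed

lemma dord_bij: "bij_betw (dord :: 'd::finite \<Rightarrow> nat) UNIV {..<CARD('d)}"
proof -
  have "\<exists>f. bij_betw f (UNIV :: 'd set) {..<CARD('d)}"
    using ex_bij_betw_finite_nat[of "UNIV :: 'd set"] by (auto simp: atLeast0LessThan)
  thus ?thesis unfolding dord_def by (rule someI_ex)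
qed

lemma
  fixes J :: "'d::finite set"
  shows distinct_ilist: "distinct (ilist J)"
    and set_ilist [simp]: "set (ilist J) = J"
    and length_ilist [simp]: "length (ilist J) = card J"
proof -
  have inj: "inj (dord :: 'd \<Rightarrow> nat)" using dord_bij bij_betw_imp_inj_on by blast
  show "set (ilist J) = J" unfolding ilist_def using inj by (simp add: image_image)
  have "inj_on (inv_into UNIV (dord :: 'd \<Rightarrow> nat)) (dord ` J)"
    by (rule inj_on_inverseI[where g = dord]) (auto simp: f_inv_into_f)
  thus "distinct (ilist J)" unfolding ilist_def by (simp add: distinct_map)
  show "length (ilist J) = card J" unfolding ilist_def
    using card_image[OF inj_on_subset[OF inj]] by simp
qed

lemma image_eq_if_inj_into_card:
  assumes "f \<in> PiE {..<n} (\<lambda>_. J)" "inj_on f {..<n}" "card J = n" "finite J"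
  shows "f ` {..<n} = J"
  using assms card_image[OF assms(2)] by (intro card_subset_eq) auto

lemma cauchy_binet:
  fixes P :: "nat \<Rightarrow> 'd::finite \<Rightarrow> real" and Q :: "'d \<Rightarrow> nat \<Rightarrow> real"
  shows "ldet n (\<lambda>r c. \<Sum>t\<in>UNIV. P r t * Q t c)
    = (\<Sum>J | card J = n. ldet n (\<lambda>r c. P r (ilist J ! c)) * ldet n (\<lambda>r c. Q (ilist J ! r) c))"
proof -
  let ?G = "\<lambda>f. (\<Prod>r<n. P r (f r)) * ldet n (\<lambda>r c. Q (f r) c)"
  let ?A = "\<lambda>J::'d set. {f. f \<in> PiE {..<n} (\<lambda>_. set (ilist J)) \<and> inj_on f {..<n}}"
  have "{f. f \<in> PiE {..<n} (\<lambda>_. UNIV) \<and> inj_on f {..<n}} = (\<Union>J\<in>{J. card J = n}. ?A J)"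
  proof (intro equalityI subsetI)
    fix f :: "nat \<Rightarrow> 'd"
    assume f: "f \<in> {f. f \<in> PiE {..<n} (\<lambda>_. UNIV) \<and> inj_on f {..<n}}"
    hence "f \<in> ?A (f ` {..<n})" "card (f ` {..<n}) = n"
      using card_image[of f "{..<n}"] by (auto simp: PiE_def)
    thus "f \<in> (\<Union>J\<in>{J. card J = n}. ?A J)" by blast
  qed (auto simp: PiE_def)
  hence "ldet n (\<lambda>r c. \<Sum>t\<in>UNIV. P r t * Q t c) = (\<Sum>f\<in>(\<Union>J\<in>{J. card J = n}. ?A J). ?G f)"
    using ldet_sum_rows[of UNIV n P Q] by simp
  also have "\<dots> = (\<Sum>J | card J = n. \<Sum>f\<in>?A J. ?G f)"
  proof (rule sum.UNION_disjoint)
    show "\<forall>J\<in>{J. card J = n}. finite (?A J)" by (simp add: finite_PiE)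
    show "\<forall>J1\<in>{J. card J = n}. \<forall>J2\<in>{J. card J = n}. J1 \<noteq> J2 \<longrightarrow> ?A J1 \<inter> ?A J2 = {}"
    proof (intro ballI impI)
      fix J1 J2 :: "'d set"
      assume J: "J1 \<in> {J. card J = n}" "J2 \<in> {J. card J = n}" "J1 \<noteq> J2"
      show "?A J1 \<inter> ?A J2 = {}"
      proof (rule ccontr)
        assume "?A J1 \<inter> ?A J2 \<noteq> {}"
        then obtain f where "f \<in> ?A J1" "f \<in> ?A J2" by blast
        hence "f ` {..<n} = J1" "f ` {..<n} = J2"
          using J image_eq_if_inj_into_card[of f n J1] image_eq_if_inj_into_card[of f n J2] by auto
        thus False using J(3) by simp
      qed
    qed
  qed simp
  also have "\<dots> = (\<Sum>J | card J = n. ldet n (\<lambda>r c. P r (ilist J ! c)) * ldet n (\<lambda>r c. Q (ilist J ! r) c))"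
    by (rule sum.cong[OF refl], rule sum_inj_rows_eq_ldet_mult) (simp_all add: distinct_ilist)
  finally show ?thesis .
qed

section \<open>Exterior powers on decomposable vectors\<close>

text \<open>\<open>wedge i x\<close> is the coordinate vector of \<open>x 0 \<and> \<dots> \<and> x (i - 1)\<close> in the basis of
  \<open>\<wedge>\<^sub>i\<close> indexed by \<open>ext_idx i\<close>, and \<open>ext_map i M\<close> is the action of \<open>\<wedge>\<^sub>i M\<close>.\<close>
definition wedge :: "nat \<Rightarrow> (nat \<Rightarrow> real^'d) \<Rightarrow> 'd::finite set \<Rightarrow> real" where
  "wedge i x = (\<lambda>I. if card I = i then ldet i (\<lambda>r c. x c $ (ilist I ! r)) else 0)"

definition ext_map :: "nat \<Rightarrow> real^'d^'d \<Rightarrow> ('d::finite set \<Rightarrow> real) \<Rightarrow> ('d set \<Rightarrow> real)" where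
  "ext_map i M = mv (ext_idx i) (ext_pow i M)"

lemma ext_map_wedge:
  fixes M :: "real^'d::finite^'d"
  shows "ext_map i M (wedge i x) = wedge i (\<lambda>c. M *v x c)"
proof
  fix I :: "'d set"
  show "ext_map i M (wedge i x) I = wedge i (\<lambda>c. M *v x c) I"
  proof (cases "card I = i")
    case True
    have "ext_map i M (wedge i x) I
        = (\<Sum>J | card J = i. ldet i (\<lambda>r c. M $ (ilist I ! r) $ (ilist J ! c))
                              * ldet i (\<lambda>r c. x c $ (ilist J ! r)))"
      using True unfolding ext_map_def mv_def ext_idx_def ext_pow_def wedge_def
      by (auto intro!: sum.cong)
    also have "\<dots> = ldet i (\<lambda>r c. \<Sum>t\<in>UNIV. M $ (ilist I ! r) $ t * x c $ t)"
      by (rule cauchy_binet[symmetric])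
    also have "\<dots> = wedge i (\<lambda>c. M *v x c) I"
      using True unfolding wedge_def by (simp add: matrix_vector_mult_def)
    finally show ?thesis .
  qed (simp add: ext_map_def mv_def ext_idx_def wedge_def)
qed

definition wedge_comb :: "nat \<Rightarrow> ('d set \<Rightarrow> real) \<Rightarrow> ('d set \<Rightarrow> nat \<Rightarrow> real^'d)
    \<Rightarrow> 'd::finite set \<Rightarrow> real" where
  "wedge_comb i a X = (\<lambda>I. \<Sum>J\<in>ext_idx i. a J * wedge i (X J) I)"

lemma ext_map_eq_wedge_comb: "ext_map i M u = wedge_comb i u (\<lambda>J c. M *v axis (ilist J ! c) 1)"
proof
  fix I
  show "ext_map i M u I = wedge_comb i u (\<lambda>J c. M *v axis (ilist J ! c) 1) I"
    by (cases "card I = i")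
      (auto intro!: sum.cong simp: ext_map_def mv_def ext_idx_def ext_pow_def wedge_def
        wedge_comb_def matrix_vector_mult_basis column_def)
qed

lemma ext_map_wedge_comb: "ext_map i M (wedge_comb i a X) = wedge_comb i a (\<lambda>J c. M *v X J c)"
proof -
  have "ext_map i M (wedge_comb i a X) = (\<lambda>I. \<Sum>J\<in>ext_idx i. a J * ext_map i M (wedge i (X J)) I)"
    unfolding ext_map_def mv_def wedge_comb_def
    by (auto simp: fun_eq_iff sum_distrib_left algebra_simps intro: sum.swap)
  thus ?thesis by (simp add: ext_map_wedge wedge_comb_def)
qed

lemma ext_map_mult: "ext_map i (X ** Y) u = ext_map i X (ext_map i Y u)"
  by (simp add: ext_map_eq_wedge_comb[of i Y] ext_map_wedge_comb
      ext_map_eq_wedge_comb[of i "X ** Y"] matrix_vector_mul_assoc)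

text \<open>\<open>wedge_combs i R\<close> is \<open>\<wedge>\<^sub>i R\<close>, the span of the wedges of vectors of \<open>R\<close>.\<close>
definition wedge_combs :: "nat \<Rightarrow> (real^'d) set \<Rightarrow> ('d::finite set \<Rightarrow> real) set" where
  "wedge_combs i R = {wedge_comb i a X | a X. \<forall>J c. X J c \<in> R}"

lemma wedge_combsE:
  assumes "v \<in> wedge_combs i R"
  obtains a X where "\<forall>J c. X J c \<in> R" "v = wedge_comb i a X"
  using assms unfolding wedge_combs_def by blast

lemma mrange_ext_pow_subset_wedge_combs:
  "mrange (ext_idx i) (ext_pow i M) \<subseteq> wedge_combs i (range (\<lambda>x. M *v x))"
  unfolding mrange_def wedge_combs_def ext_map_def[symmetric] ext_map_eq_wedge_comb by blast

lemma wedge_rank_one: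
  fixes x X :: "nat \<Rightarrow> real^'d::finite"
  assumes "card I0 = i"
  shows "wedge i (\<lambda>c. \<Sum>s<i. (X c $ (ilist I0 ! s)) *\<^sub>R x s) = (\<lambda>I. wedge i x I * wedge i X I0)"
proof
  fix I :: "'d set"
  show "wedge i (\<lambda>c. \<Sum>s<i. (X c $ (ilist I0 ! s)) *\<^sub>R x s) I = wedge i x I * wedge i X I0"
  proof (cases "card I = i")
    case True
    have "wedge i (\<lambda>c. \<Sum>s<i. (X c $ (ilist I0 ! s)) *\<^sub>R x s) I
        = ldet i (\<lambda>r c. \<Sum>s<i. x s $ (ilist I ! r) * X c $ (ilist I0 ! s))"
      using True unfolding wedge_def by (simp add: mult.commute)
    also have "\<dots> = ldet i (\<lambda>r s. x s $ (ilist I ! r)) * ldet i (\<lambda>s c. X c $ (ilist I0 ! s))"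
      by (rule ldet_mult)
    finally show ?thesis using True assms by (simp add: wedge_def)
  qed (simp add: wedge_def)
qed

section \<open>Linear automorphisms of a subspace\<close>

lemma linear_inj_on_if_dim_image_eq:
  fixes f :: "real^'n \<Rightarrow> real^'m"
  assumes lf: "linear f" and S: "subspace S" and d: "dim (f ` S) = dim S"
  shows "inj_on f S"
proof -
  obtain B where B: "B \<subseteq> S" "independent B" "S \<subseteq> span B" "card B = dim S"
    using basis_exists by blast
  have fB: "finite B" using B(2) finiteI_independent by blast
  have sp: "f ` S \<subseteq> span (f ` B)"
    using B(3) lf by (metis image_mono linear_span_image)
  have "dim (f ` S) \<le> card (f ` B)"
    using span_card_ge_dim[OF _ sp] B(1) fB by auto
  moreover have "card (f ` B) \<le> card B" using card_image_le fB by blast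
  ultimately have c: "card (f ` B) = card B" using B(4) d by linarith
  have "independent (f ` B)"
    using card_le_dim_spanning[OF _ sp] B(1) fB c B(4) d by auto
  then have "inj_on f (span B)"
    using linear_inj_on_span_iff_independent_image[OF lf] c fB eq_card_imp_inj_on by metis
  moreover have "span B = S" using B S by (simp add: span_subspace)
  ultimately show ?thesis by simp
qed

lemma linear_image_eq_if_inj_on:
  fixes f :: "real^'n \<Rightarrow> real^'n"
  assumes lf: "linear f" and S: "subspace S" and sub: "f ` S \<subseteq> S" and inj: "inj_on f S"
  shows "f ` S = S"
proof -
  have sS: "span S = S" using S by (simp add: span_eq_iff)
  have "dim (f ` S) = dim S" using dim_image_eq[OF lf, of S] inj unfolding sS by simp
  thus ?thesis using subspace_dim_equal[OF linear_subspace_image[OF lf S] S sub] by simp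
qed

lemma linear_bij_betw_inverse:
  fixes g :: "real^'n \<Rightarrow> real^'m"
  assumes "linear g" "subspace R" "bij_betw g R S"
  obtains \<psi> where "linear \<psi>" "bij_betw \<psi> S R" "\<And>x. x \<in> R \<Longrightarrow> \<psi> (g x) = x"
    "\<And>y. y \<in> S \<Longrightarrow> g (\<psi> y) = y"
proof -
  have gR: "g ` R = S" and inj: "inj_on g R" using assms(3) by (simp_all add: bij_betw_def)
  obtain \<psi> where \<psi>: "linear \<psi>" "\<And>x. x \<in> R \<Longrightarrow> \<psi> (g x) = x"
    using linear_exists_left_inverse_on[OF assms(1,2) inj] by blast
  have right: "g (\<psi> y) = y" if "y \<in> S" for y using that gR \<psi>(2) by auto
  have "bij_betw \<psi> S R"
    by (rule bij_betw_byWitness[where f' = g]) (use gR \<psi>(2) right in auto)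
  thus thesis using \<psi> right that by blast
qed

lemma GLs_carrier_iff:
  "f \<in> carrier (GLs R) \<longleftrightarrow> (\<exists>g. linear g \<and> bij_betw g R R \<and> f = restrict g R)"
  by (simp add: GLs_def)

lemma GLs_carrierE:
  assumes "f \<in> carrier (GLs R)"
  obtains g where "linear g" "bij_betw g R R" "f = restrict g R"
  using assms by (auto simp: GLs_carrier_iff)

lemma GLs_mult: "f \<otimes>\<^bsub>GLs R\<^esub> g = restrict (f \<circ> g) R"
  by (simp add: GLs_def)

lemma GLs_one: "\<one>\<^bsub>GLs R\<^esub> = restrict id R"
  by (simp add: GLs_def)

lemma GLs_closed: "f \<in> carrier (GLs R) \<Longrightarrow> x \<in> R \<Longrightarrow> f x \<in> R"
  by (auto simp: GLs_carrier_iff bij_betw_def)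

lemma restrict_in_GLs: "linear g \<Longrightarrow> bij_betw g R R \<Longrightarrow> restrict g R \<in> carrier (GLs R)"
  by (auto simp: GLs_carrier_iff)

lemma GLs_group:
  fixes R :: "(real^'n) set"
  assumes R: "subspace R"
  shows "group (GLs R)"
proof (rule groupI)
  fix f g assume "f \<in> carrier (GLs R)" "g \<in> carrier (GLs R)"
  then obtain f' g' where "linear f'" "bij_betw f' R R" "f = restrict f' R"
    and "linear g'" "bij_betw g' R R" "g = restrict g' R" by (auto elim!: GLs_carrierE)
  moreover from this have "f \<otimes>\<^bsub>GLs R\<^esub> g = restrict (f' \<circ> g') R"
    by (auto simp: GLs_mult bij_betw_def fun_eq_iff)
  ultimately show "f \<otimes>\<^bsub>GLs R\<^esub> g \<in> carrier (GLs R)"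
    by (metis restrict_in_GLs linear_compose bij_betw_trans)
next
  show "\<one>\<^bsub>GLs R\<^esub> \<in> carrier (GLs R)"
    unfolding GLs_one by (rule restrict_in_GLs) (auto simp: linear_id)
next
  fix f g h assume "h \<in> carrier (GLs R)"
  thus "f \<otimes>\<^bsub>GLs R\<^esub> g \<otimes>\<^bsub>GLs R\<^esub> h = f \<otimes>\<^bsub>GLs R\<^esub> (g \<otimes>\<^bsub>GLs R\<^esub> h)"
    using GLs_closed by (auto simp: GLs_mult fun_eq_iff)
next
  fix f assume "f \<in> carrier (GLs R)"
  thus "\<one>\<^bsub>GLs R\<^esub> \<otimes>\<^bsub>GLs R\<^esub> f = f"
    by (auto elim!: GLs_carrierE simp: GLs_mult GLs_one fun_eq_iff bij_betw_apply)
next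
  fix f assume "f \<in> carrier (GLs R)"
  then obtain g where g: "linear g" "bij_betw g R R" "f = restrict g R" by (rule GLs_carrierE)
  obtain \<psi> where \<psi>: "linear \<psi>" "bij_betw \<psi> R R" "\<And>x. x \<in> R \<Longrightarrow> \<psi> (g x) = x"
    using linear_bij_betw_inverse[OF g(1) R g(2)] by metis
  have "restrict \<psi> R \<otimes>\<^bsub>GLs R\<^esub> f = \<one>\<^bsub>GLs R\<^esub>"
    using g(2,3) \<psi>(3) by (auto simp: GLs_mult GLs_one fun_eq_iff bij_betw_def)
  thus "\<exists>f'\<in>carrier (GLs R). f' \<otimes>\<^bsub>GLs R\<^esub> f = \<one>\<^bsub>GLs R\<^esub>"
    using restrict_in_GLs[OF \<psi>(1,2)] by blast
qed

definition conj_GL :: "(real^'n \<Rightarrow> real^'n) \<Rightarrow> (real^'n) set \<Rightarrow> (real^'n) set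
    \<Rightarrow> (real^'n \<Rightarrow> real^'n) \<Rightarrow> (real^'n \<Rightarrow> real^'n)" where
  "conj_GL \<phi> R S g = restrict (\<phi> \<circ> g \<circ> inv_into R \<phi>) S"

lemma conj_GL_group_hom:
  fixes \<phi> :: "real^'n \<Rightarrow> real^'n"
  assumes R: "subspace R" and S: "subspace S" and \<phi>: "linear \<phi>" "bij_betw \<phi> R S"
  shows "group_hom (GLs R) (GLs S) (conj_GL \<phi> R S)"
proof -
  obtain \<psi> where \<psi>: "linear \<psi>" "bij_betw \<psi> S R" "\<And>y. y \<in> S \<Longrightarrow> \<phi> (\<psi> y) = y"
    using linear_bij_betw_inverse[OF \<phi>(1) R \<phi>(2)] by metis
  have inv: "y \<in> S \<Longrightarrow> inv_into R \<phi> y = \<psi> y" for y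
    using \<phi>(2) \<psi> by (metis bij_betw_apply bij_betw_imp_inj_on inv_into_f_f)
  have "conj_GL \<phi> R S f \<in> carrier (GLs S)" if f: "f \<in> carrier (GLs R)" for f
  proof -
    obtain g where g: "linear g" "bij_betw g R R" "f = restrict g R"
      using f by (rule GLs_carrierE)
    have "conj_GL \<phi> R S f = restrict (\<phi> \<circ> g \<circ> \<psi>) S"
      using g(3) \<psi>(2) inv by (auto simp: conj_GL_def fun_eq_iff bij_betw_apply)
    thus ?thesis
      using restrict_in_GLs linear_compose[OF linear_compose[OF \<psi>(1) g(1)] \<phi>(1)]
        bij_betw_trans[OF bij_betw_trans[OF \<psi>(2) g(2)] \<phi>(2)] by (metis comp_assoc)
  qed
  moreover have "conj_GL \<phi> R S (f \<otimes>\<^bsub>GLs R\<^esub> g)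
      = conj_GL \<phi> R S f \<otimes>\<^bsub>GLs S\<^esub> conj_GL \<phi> R S g" if "g \<in> carrier (GLs R)" for f g
    using that \<phi>(2) \<psi>(2,3) inv GLs_closed[OF that]
    by (auto simp: conj_GL_def GLs_mult fun_eq_iff bij_betw_apply bij_betw_imp_inj_on inv_into_f_f)
  ultimately show ?thesis
    using GLs_group[OF R] GLs_group[OF S]
    by (auto simp: group_hom_def group_hom_axioms_def intro!: homI)
qed

lemma (in group) subgroup_mem_if_mult_mem_right:
  assumes H: "subgroup H G" and "a \<in> carrier G" "b \<in> H" "a \<otimes> b \<in> H"
  shows "a \<in> H"
proof -
  have "a = (a \<otimes> b) \<otimes> inv b"
    using assms subgroup.mem_carrier[OF H] by (simp add: inv_solve_right)
  thus ?thesis using assms subgroup.m_closed[OF H] subgroup.m_inv_closed[OF H] by metis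
qed

lemma (in group) subgroup_mem_if_mult_mem_left:
  assumes H: "subgroup H G" and "b \<in> carrier G" "a \<in> H" "a \<otimes> b \<in> H"
  shows "b \<in> H"
proof -
  have "b = inv a \<otimes> (a \<otimes> b)"
    using assms subgroup.mem_carrier[OF H] by (simp add: inv_solve_left)
  thus ?thesis using assms subgroup.m_closed[OF H] subgroup.m_inv_closed[OF H] by metis
qed

lemma (in group) generate_preserves:
  assumes act_mult: "\<And>g h v. g \<in> carrier G \<Longrightarrow> h \<in> carrier G \<Longrightarrow> v \<in> V \<Longrightarrow> f (g \<otimes> h) v = f g (f h v)"
    and act_one: "\<And>v. v \<in> V \<Longrightarrow> f \<one> v = v"
    and S: "S \<subseteq> carrier G" and S_pres: "\<And>s. s \<in> S \<Longrightarrow> f s ` V = V"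
    and g: "g \<in> generate G S"
  shows "f g ` V = V"
  using g
proof (induction rule: generate.induct)
  case one
  show ?case using act_one by simp
next
  case (incl s)
  thus ?case by (rule S_pres)
next
  case (inv s)
  have s: "s \<in> carrier G" using inv S by blast
  have "f (inv s) ` V = f (inv s) ` f s ` V" using S_pres[OF inv] by simp
  also have "\<dots> = f (inv s \<otimes> s) ` V" using act_mult[OF inv_closed[OF s] s] by (simp add: image_image)
  also have "\<dots> = V" using act_one s by simp
  finally show ?case .
next
  case (eng g h)
  have "g \<in> carrier G" "h \<in> carrier G" using eng.hyps generate_in_carrier[OF S] by auto
  hence "f (g \<otimes> h) ` V = f g ` f h ` V" using act_mult by (simp add: image_image)
  thus ?case using eng.IH by simp
qed

section \<open>Words in the matrices\<close>

lemma subspace_Rg: "subspace (Rg A l)"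
  unfolding Rg_def by (rule linear_subspace_image[OF matrix_vector_mul_linear subspace_UNIV])

lemma Rg_mult_bij_betw:
  assumes "rank (A a) = k" "rank (A b) = k" "rank (A a ** A b) = k"
  shows "bij_betw (\<lambda>x. A a *v x) (Rg A b) (Rg A a)"
proof -
  let ?f = "\<lambda>x. A a *v x"
  have img: "?f ` Rg A b = range (\<lambda>x. (A a ** A b) *v x)"
    unfolding Rg_def by (auto simp: image_image matrix_vector_mul_assoc)
  have d: "dim (?f ` Rg A b) = k" "dim (Rg A a) = k" "dim (Rg A b) = k"
    using assms img rank_dim_range unfolding Rg_def by metis+
  have "?f ` Rg A b \<subseteq> Rg A a" unfolding Rg_def by auto
  hence "?f ` Rg A b = Rg A a"
    by (rule subspace_dim_equal[OF linear_subspace_image[OF matrix_vector_mul_linear subspace_Rg]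
          subspace_Rg]) (simp add: d)
  moreover have "inj_on ?f (Rg A b)"
    by (rule linear_inj_on_if_dim_image_eq[OF matrix_vector_mul_linear subspace_Rg]) (simp add: d)
  ultimately show ?thesis by (simp add: bij_betw_def)
qed

lemma word_Nil: "word A l [] = A l"
  by (simp add: word_def)

lemma word_snoc: "word A l (ws @ [a]) = word A l ws ** A a"
  by (simp add: word_def)

lemma word_Cons: "word A l (a # ws) = A l ** word A a ws"
proof -
  have "foldl (**) (X ** Y) zs = X ** foldl (**) Y zs" for X Y :: "real^'n^'n" and zs
    by (induction zs arbitrary: Y) (simp_all add: matrix_mul_assoc[symmetric])
  thus ?thesis by (simp add: word_def)
qed

definition word_aut :: "(nat \<Rightarrow> real^'n^'n) \<Rightarrow> nat \<Rightarrow> nat list \<Rightarrow> real^'n \<Rightarrow> real^'n" where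
  "word_aut A l ws = restrict (\<lambda>x. word A l ws *v x) (Rg A l)"

definition word_auts :: "nat \<Rightarrow> (nat \<Rightarrow> real^'n^'n) \<Rightarrow> nat \<Rightarrow> (real^'n \<Rightarrow> real^'n) set" where
  "word_auts m A l = {word_aut A l ws | ws. set ws \<subseteq> {1..m}}"

lemma Ggrp_eq_generate_word_auts: "Ggrp m A l = generate (GLs (Rg A l)) (word_auts m A l)"
  by (simp add: Ggrp_def word_auts_def word_aut_def)

lemma ext_map_word_image:
  assumes V: "\<And>a b. a \<in> {1..m} \<Longrightarrow> b \<in> {1..m} \<Longrightarrow> ext_map i (A a) ` V b = V a"
    and l: "l \<in> {1..m}" and b: "b \<in> {1..m}" and ws: "set ws \<subseteq> {1..m}"
  shows "ext_map i (word A l ws) ` V b = V l"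
  using ws b
proof (induction ws arbitrary: b rule: rev_induct)
  case Nil
  thus ?case using V[OF l] by (simp add: word_Nil)
next
  case (snoc a ws)
  have a: "a \<in> {1..m}" using snoc.prems by simp
  have "ext_map i (word A l (ws @ [a])) ` V b = ext_map i (word A l ws) ` ext_map i (A a) ` V b"
    by (simp add: word_snoc ext_map_mult image_image)
  thus ?case using V[OF a snoc.prems(2)] snoc.IH[OF _ a] snoc.prems(1) by simp
qed

locale rank_stable_tuple =
  fixes A :: "nat \<Rightarrow> real^'n^'n" and m k :: nat
  assumes rank_eq: "j \<in> {1..m} \<Longrightarrow> rank (A j) = k"
    and rank_mult_eq: "a \<in> {1..m} \<Longrightarrow> b \<in> {1..m} \<Longrightarrow> rank (A a ** A b) = k"
begin

lemma mult_bij_betw: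
  "a \<in> {1..m} \<Longrightarrow> b \<in> {1..m} \<Longrightarrow> bij_betw (\<lambda>x. A a *v x) (Rg A b) (Rg A a)"
  by (rule Rg_mult_bij_betw) (simp_all add: rank_eq rank_mult_eq)

lemma inv_into_mult:
  assumes "a \<in> {1..m}" "b \<in> {1..m}" "x \<in> Rg A b"
  shows "inv_into (Rg A b) (\<lambda>x. A a *v x) (A a *v x) = x"
  using bij_betw_imp_inj_on[OF mult_bij_betw[OF assms(1,2)]] assms(3) by (rule inv_into_f_f)

lemma word_bij_betw:
  assumes "l \<in> {1..m}" "b \<in> {1..m}" "set ws \<subseteq> {1..m}"
  shows "bij_betw (\<lambda>x. word A l ws *v x) (Rg A b) (Rg A l)"
  using assms(3,2)
proof (induction ws arbitrary: b rule: rev_induct)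
  case Nil
  thus ?case using mult_bij_betw[OF assms(1)] by (simp add: word_Nil)
next
  case (snoc a ws)
  have a: "a \<in> {1..m}" using snoc.prems by simp
  have "(\<lambda>x. word A l (ws @ [a]) *v x) = (\<lambda>x. word A l ws *v x) \<circ> (\<lambda>x. A a *v x)"
    by (auto simp: word_snoc matrix_vector_mul_assoc)
  thus ?case
    using bij_betw_trans[OF mult_bij_betw[OF a snoc.prems(2)] snoc.IH[OF _ a]] snoc.prems(1)
    by (simp add: comp_def)
qed

lemma word_aut_in_GLs:
  "l \<in> {1..m} \<Longrightarrow> set ws \<subseteq> {1..m} \<Longrightarrow> word_aut A l ws \<in> carrier (GLs (Rg A l))"
  unfolding word_aut_def by (rule restrict_in_GLs[OF matrix_vector_mul_linear word_bij_betw])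

lemma word_auts_subset_GLs: "l \<in> {1..m} \<Longrightarrow> word_auts m A l \<subseteq> carrier (GLs (Rg A l))"
  using word_aut_in_GLs by (auto simp: word_auts_def)

lemma conj_GL_mult_group_hom:
  "i \<in> {1..m} \<Longrightarrow> j \<in> {1..m} \<Longrightarrow>
    group_hom (GLs (Rg A i)) (GLs (Rg A j)) (conj_GL (\<lambda>x. A j *v x) (Rg A i) (Rg A j))"
  by (rule conj_GL_group_hom[OF subspace_Rg subspace_Rg matrix_vector_mul_linear mult_bij_betw])

lemma conj_word_aut_mult_eq_word_aut:
  assumes i: "i \<in> {1..m}" and j: "j \<in> {1..m}"
  shows "conj_GL (\<lambda>x. A j *v x) (Rg A i) (Rg A j) (word_aut A i ws)
           \<otimes>\<^bsub>GLs (Rg A j)\<^esub> word_aut A j [i]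
       = word_aut A j (i # ws @ [i])"
proof
  fix y
  let ?c = "conj_GL (\<lambda>x. A j *v x) (Rg A i) (Rg A j)"
  show "(?c (word_aut A i ws) \<otimes>\<^bsub>GLs (Rg A j)\<^esub> word_aut A j [i]) y = word_aut A j (i # ws @ [i]) y"
  proof (cases "y \<in> Rg A j")
    case True
    have Aiy: "A i *v y \<in> Rg A i" and "A j *v (A i *v y) \<in> Rg A j" by (simp_all add: Rg_def)
    have "(?c (word_aut A i ws) \<otimes>\<^bsub>GLs (Rg A j)\<^esub> word_aut A j [i]) y
        = ?c (word_aut A i ws) (A j *v (A i *v y))"
      using True by (simp add: GLs_mult word_aut_def word_def matrix_vector_mul_assoc)
    also have "\<dots> = A j *v (word A i ws *v (A i *v y))"
      using Aiy \<open>A j *v (A i *v y) \<in> Rg A j\<close>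
      by (simp add: conj_GL_def word_aut_def inv_into_mult[OF j i Aiy])
    also have "\<dots> = word_aut A j (i # ws @ [i]) y"
      using True by (simp add: word_aut_def word_Cons word_snoc matrix_vector_mul_assoc)
    finally show ?thesis .
  qed (simp add: GLs_mult word_aut_def)
qed

lemma conj_word_aut_mult_eq_conj_word_aut:
  assumes i: "i \<in> {1..m}" and j: "j \<in> {1..m}" and ws: "set ws \<subseteq> {1..m}"
  shows "conj_GL (\<lambda>x. A j *v x) (Rg A i) (Rg A j) (word_aut A i [j])
           \<otimes>\<^bsub>GLs (Rg A j)\<^esub> word_aut A j ws
       = conj_GL (\<lambda>x. A j *v x) (Rg A i) (Rg A j) (word_aut A i (j # ws @ [j]))"
proof
  fix y
  let ?c = "conj_GL (\<lambda>x. A j *v x) (Rg A i) (Rg A j)"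
  let ?\<phi>' = "inv_into (Rg A i) (\<lambda>x. A j *v x)"
  have bij: "bij_betw (\<lambda>x. A j *v x) (Rg A i) (Rg A j)" by (rule mult_bij_betw[OF j i])
  have inv: "?\<phi>' z \<in> Rg A i" "A j *v ?\<phi>' z = z" if "z \<in> Rg A j" for z
    using that bij by (auto simp: bij_betw_def inv_into_into f_inv_into_f)
  show "(?c (word_aut A i [j]) \<otimes>\<^bsub>GLs (Rg A j)\<^esub> word_aut A j ws) y
      = ?c (word_aut A i (j # ws @ [j])) y"
  proof (cases "y \<in> Rg A j")
    case True
    have wy: "word A j ws *v y \<in> Rg A j" using bij_betw_apply[OF word_bij_betw[OF j j ws] True] .
    have "(?c (word_aut A i [j]) \<otimes>\<^bsub>GLs (Rg A j)\<^esub> word_aut A j ws) y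
        = A j *v (A i *v (A j *v ?\<phi>' (word A j ws *v y)))"
      using True wy inv(1)[OF wy]
      by (simp add: GLs_mult conj_GL_def word_aut_def word_def matrix_vector_mul_assoc)
    also have "\<dots> = A j *v (A i *v (word A j ws *v (A j *v ?\<phi>' y)))"
      using inv(2)[OF wy] inv(2)[OF True] by simp
    also have "\<dots> = ?c (word_aut A i (j # ws @ [j])) y"
      using True inv(1)[OF True]
      by (simp add: conj_GL_def word_aut_def word_Cons word_snoc matrix_vector_mul_assoc)
    finally show ?thesis .
  qed (simp add: GLs_mult conj_GL_def word_aut_def)
qed

lemma conj_word_auts_subset_generate:
  assumes i: "i \<in> {1..m}" and j: "j \<in> {1..m}"
  shows "conj_GL (\<lambda>x. A j *v x) (Rg A i) (Rg A j) ` word_auts m A i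
           \<subseteq> generate (GLs (Rg A j)) (word_auts m A j)"
proof
  let ?c = "conj_GL (\<lambda>x. A j *v x) (Rg A i) (Rg A j)" and ?Gj = "GLs (Rg A j)"
  interpret H: group_hom "GLs (Rg A i)" ?Gj ?c by (rule conj_GL_mult_group_hom[OF i j])
  fix g assume "g \<in> ?c ` word_auts m A i"
  then obtain ws where ws: "set ws \<subseteq> {1..m}" and g: "g = ?c (word_aut A i ws)"
    by (auto simp: word_auts_def)
  show "g \<in> generate ?Gj (word_auts m A j)"
    unfolding g
  proof (rule H.H.subgroup_mem_if_mult_mem_right[OF H.H.generate_is_subgroup[OF word_auts_subset_GLs[OF j]]])
    show "?c (word_aut A i ws) \<in> carrier ?Gj" by (rule H.hom_closed[OF word_aut_in_GLs[OF i ws]])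
    show "word_aut A j [i] \<in> generate ?Gj (word_auts m A j)"
      using i by (intro generate.incl) (auto simp: word_auts_def intro!: exI[of _ "[i]"])
    show "?c (word_aut A i ws) \<otimes>\<^bsub>?Gj\<^esub> word_aut A j [i] \<in> generate ?Gj (word_auts m A j)"
      unfolding conj_word_aut_mult_eq_word_aut[OF i j] using i ws
      by (intro generate.incl) (auto simp: word_auts_def intro!: exI[of _ "i # ws @ [i]"])
  qed
qed

lemma word_auts_subset_generate_conj:
  assumes i: "i \<in> {1..m}" and j: "j \<in> {1..m}"
  shows "word_auts m A j \<subseteq> generate (GLs (Rg A j))
           (conj_GL (\<lambda>x. A j *v x) (Rg A i) (Rg A j) ` word_auts m A i)"
proof
  let ?c = "conj_GL (\<lambda>x. A j *v x) (Rg A i) (Rg A j)" and ?Gj = "GLs (Rg A j)"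
  interpret H: group_hom "GLs (Rg A i)" ?Gj ?c by (rule conj_GL_mult_group_hom[OF i j])
  have sub: "?c ` word_auts m A i \<subseteq> carrier ?Gj"
    using word_auts_subset_GLs[OF i] H.hom_closed by blast
  fix g assume "g \<in> word_auts m A j"
  then obtain ws where ws: "set ws \<subseteq> {1..m}" and g: "g = word_aut A j ws"
    by (auto simp: word_auts_def)
  show "g \<in> generate ?Gj (?c ` word_auts m A i)"
    unfolding g
  proof (rule H.H.subgroup_mem_if_mult_mem_left[OF H.H.generate_is_subgroup[OF sub]])
    show "word_aut A j ws \<in> carrier ?Gj" by (rule word_aut_in_GLs[OF j ws])
    show "?c (word_aut A i [j]) \<in> generate ?Gj (?c ` word_auts m A i)"
      using j by (intro generate.incl imageI) (auto simp: word_auts_def intro!: exI[of _ "[j]"])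
    show "?c (word_aut A i [j]) \<otimes>\<^bsub>?Gj\<^esub> word_aut A j ws \<in> generate ?Gj (?c ` word_auts m A i)"
      unfolding conj_word_aut_mult_eq_conj_word_aut[OF i j ws] using j ws
      by (intro generate.incl imageI) (auto simp: word_auts_def intro!: exI[of _ "j # ws @ [j]"])
  qed
qed

lemma Ggrp_conjugate:
  assumes i: "i \<in> {1..m}" and j: "j \<in> {1..m}"
  shows "Ggrp m A j = conj_GL (\<lambda>x. A j *v x) (Rg A i) (Rg A j) ` Ggrp m A i"
proof -
  let ?c = "conj_GL (\<lambda>x. A j *v x) (Rg A i) (Rg A j)" and ?Gj = "GLs (Rg A j)"
  interpret H: group_hom "GLs (Rg A i)" ?Gj ?c by (rule conj_GL_mult_group_hom[OF i j])
  have "generate ?Gj (word_auts m A j) = generate ?Gj (?c ` word_auts m A i)"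
    using conj_word_auts_subset_generate[OF i j] word_auts_subset_generate_conj[OF i j]
      word_auts_subset_GLs[OF j] word_auts_subset_GLs[OF i] H.hom_closed
    by (intro subset_antisym H.H.generate_subgroup_incl H.H.generate_is_subgroup) auto
  also have "\<dots> = ?c ` generate (GLs (Rg A i)) (word_auts m A i)"
    by (rule H.generate_img[OF word_auts_subset_GLs[OF i]])
  finally show ?thesis by (simp add: Ggrp_eq_generate_word_auts)
qed

end

section \<open>Polynomial functions and Zariski density\<close>

lemma polyfun_sum:
  assumes "finite F" "\<And>x. x \<in> F \<Longrightarrow> (\<lambda>g. f x g) \<in> polyfun R"
  shows "(\<lambda>g. \<Sum>x\<in>F. f x g) \<in> polyfun R"
  using assms by (induction F rule: finite_induct) (auto intro: polyfun.intros)

lemma polyfun_prod: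
  assumes "finite F" "\<And>x. x \<in> F \<Longrightarrow> (\<lambda>g. f x g) \<in> polyfun R"
  shows "(\<lambda>g. \<Prod>x\<in>F. f x g) \<in> polyfun R"
  using assms by (induction F rule: finite_induct) (auto intro: polyfun.intros)

lemma polyfun_scale: "p \<in> polyfun R \<Longrightarrow> (\<lambda>g. c * p g) \<in> polyfun R"
  by (rule polyfun.mult[OF polyfun.const])

lemma polyfun_ldet:
  assumes "\<And>r c. (\<lambda>g. M g r c) \<in> polyfun R"
  shows "(\<lambda>g. ldet n (M g)) \<in> polyfun R"
  unfolding ldet_def
  by (intro polyfun_sum polyfun_scale polyfun_prod assms) (auto simp: finite_permutations)

lemma polyfun_on_line:
  assumes "p \<in> polyfun R"
  shows "\<exists>q. \<forall>t. p (restrict (\<lambda>x. h x + t *\<^sub>R x) R) = poly q t"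
  using assms
proof (induction rule: polyfun.induct)
  case (const c)
  show ?case by (intro exI[of _ "[:c:]"]) simp
next
  case (coord v j)
  show ?case by (intro exI[of _ "[:h v $ j, v $ j:]"]) (simp add: coord algebra_simps)
next
  case (add p q)
  then obtain a b where a: "\<And>t. p (restrict (\<lambda>x. h x + t *\<^sub>R x) R) = poly a t"
    and b: "\<And>t. q (restrict (\<lambda>x. h x + t *\<^sub>R x) R) = poly b t" by blast
  show ?case by (intro exI[of _ "a + b"] allI) (simp only: a b poly_add)
next
  case (mult p q)
  then obtain a b where a: "\<And>t. p (restrict (\<lambda>x. h x + t *\<^sub>R x) R) = poly a t"
    and b: "\<And>t. q (restrict (\<lambda>x. h x + t *\<^sub>R x) R) = poly b t" by blast
  show ?case by (intro exI[of _ "a * b"] allI) (simp only: a b poly_mult)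
qed

lemma restrict_shift_in_GLs:
  fixes h :: "real^'n \<Rightarrow> real^'n"
  assumes R: "subspace R" and h: "linear h" "h ` R \<subseteq> R"
    and B: "\<And>x. norm (h x) \<le> B * norm x" and t: "B < t"
  shows "restrict (\<lambda>x. h x + t *\<^sub>R x) R \<in> carrier (GLs R)"
proof -
  let ?g = "\<lambda>x. h x + t *\<^sub>R x"
  have lg: "linear ?g" using h(1) unfolding linear_iff by (simp add: algebra_simps)
  have "x = 0" if "?g x = 0" for x
  proof -
    have "\<bar>t\<bar> * norm x \<le> B * norm x"
      using B[of x] that by (simp add: eq_neg_iff_add_eq_0[symmetric])
    hence "t * norm x \<le> B * norm x"
      using mult_right_mono[OF abs_ge_self[of t] norm_ge_zero[of x]] by linarith
    thus ?thesis using t by (simp add: mult_le_cancel_right)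
  qed
  hence "inj_on ?g R" using linear_inj_on_iff_eq_0[OF lg R] by blast
  moreover have "?g ` R \<subseteq> R" using h(2) R by (auto intro!: subspace_add subspace_scale)
  ultimately have "bij_betw ?g R R"
    using linear_image_eq_if_inj_on[OF lg R] by (simp add: bij_betw_def)
  thus ?thesis by (rule restrict_in_GLs[OF lg])
qed

text \<open>\<open>p (h + t \<cdot> id)\<close> is a polynomial in \<open>t\<close> that vanishes for all large \<open>t\<close>, where
  \<open>h + t \<cdot> id\<close> is invertible on \<open>R\<close>; so it vanishes at \<open>t = 0\<close> too.\<close>
lemma zariski_dense_GL_vanishes_on_endomorphisms:
  fixes R :: "(real^'n) set" and h :: "real^'n \<Rightarrow> real^'n"
  assumes R: "subspace R" and dense: "zariski_dense_GL R G"
    and p: "p \<in> polyfun R" "\<forall>g\<in>G. p g = 0"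
    and h: "linear h" "h ` R \<subseteq> R"
  shows "p (restrict h R) = 0"
proof -
  obtain q where q: "\<And>t. p (restrict (\<lambda>x. h x + t *\<^sub>R x) R) = poly q t"
    using polyfun_on_line[OF p(1)] by blast
  obtain B where B: "\<And>x. norm (h x) \<le> B * norm x" using linear_bounded[OF h(1)] by blast
  have "poly q t = 0" if "B < t" for t
  proof -
    have "restrict (\<lambda>x. h x + t *\<^sub>R x) R \<in> carrier (GLs R)"
      by (rule restrict_shift_in_GLs[OF R h B that])
    hence "p (restrict (\<lambda>x. h x + t *\<^sub>R x) R) = 0"
      using dense p unfolding zariski_dense_GL_def by blast
    thus ?thesis by (simp only: q)
  qed
  hence "{B<..} \<subseteq> {t. poly q t = 0}" by auto
  hence "q = 0" using poly_roots_finite[of q] infinite_Ioi[of B] finite_subset by blast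
  thus ?thesis using q[of 0] by simp
qed

section \<open>Invariant subspaces of exterior powers\<close>

lemma fsubspace_sum:
  assumes V: "fsubspace S V" and "finite F" "\<And>J. J \<in> F \<Longrightarrow> f J \<in> V"
  shows "(\<lambda>I. \<Sum>J\<in>F. a J * f J I) \<in> V"
  using assms(2,3)
proof (induction F rule: finite_induct)
  case empty thus ?case using V by (simp add: fsubspace_def)
next
  case (insert J F)
  hence "(\<lambda>x. a J * f J x + (\<Sum>J\<in>F. a J * f J x)) \<in> V"
    using V unfolding fsubspace_def by simp
  thus ?case using insert(1,2) by simp
qed

text \<open>Transfer \<open>V\<close> to a subspace of \<open>real^'e\<close> and decompose \<open>y\<close> orthogonally.\<close>
lemma fsubspace_memI_annihilator:
  fixes V :: "('e::finite \<Rightarrow> real) set"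
  assumes V: "fsubspace S V" and y: "y \<in> fvecs S"
    and ann: "\<And>w. \<forall>v\<in>V. (\<Sum>I\<in>S. w I * v I) = 0 \<Longrightarrow> (\<Sum>I\<in>S. w I * y I) = 0"
  shows "y \<in> V"
proof -
  let ?vec = "\<lambda>v::'e \<Rightarrow> real. (\<chi> I. v I) :: real^'e"
  have vec_inj: "?vec u = ?vec v \<longleftrightarrow> u = v" for u v by (auto simp: vec_eq_iff fun_eq_iff)
  have inner: "(\<Sum>I\<in>S. z $ I * v I) = z \<bullet> ?vec v" if "v \<in> fvecs S" for z v
  proof -
    have "(\<Sum>I\<in>S. z $ I * v I) = (\<Sum>I\<in>UNIV. z $ I * v I)"
      using that by (intro sum.mono_neutral_left) (auto simp: fvecs_def)
    thus ?thesis by (simp add: inner_vec_def)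
  qed
  have "subspace (?vec ` V)"
    unfolding subspace_def
  proof (intro conjI ballI allI)
    show "0 \<in> ?vec ` V"
      using V by (intro image_eqI[of _ _ "\<lambda>_. 0"]) (auto simp: fsubspace_def vec_eq_iff)
    show "a + b \<in> ?vec ` V" if "a \<in> ?vec ` V" "b \<in> ?vec ` V" for a b
      using that V by (auto simp: fsubspace_def vec_eq_iff intro!: image_eqI[of _ _ "\<lambda>x. _ x + _ x"])
    show "c *\<^sub>R a \<in> ?vec ` V" if "a \<in> ?vec ` V" for a c
      using that V by (auto simp: fsubspace_def vec_eq_iff intro!: image_eqI[of _ _ "\<lambda>x. c * _ x"])
  qed
  hence sp: "span (?vec ` V) = ?vec ` V" by (simp only: span_eq_iff)
  obtain p z where p: "p \<in> ?vec ` V" and z: "\<And>w. w \<in> ?vec ` V \<Longrightarrow> orthogonal z w"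
    and yz: "?vec y = p + z"
    using orthogonal_subspace_decomp_exists[of "?vec ` V" "?vec y"] unfolding sp by blast
  have "\<forall>v\<in>V. (\<Sum>I\<in>S. z $ I * v I) = 0"
    using V z inner by (auto simp: fsubspace_def orthogonal_def)
  hence "z \<bullet> ?vec y = 0" using ann[of "\<lambda>I. z $ I"] inner[OF y] by simp
  moreover have "z \<bullet> p = 0" using z[OF p] by (simp add: orthogonal_def)
  ultimately have "z = 0" using yz by (simp add: inner_add_right)
  thus ?thesis using yz p vec_inj by auto
qed

text \<open>For a projection \<open>P\<close> onto \<open>R\<close>, \<open>ext_matrix P g\<close> is the matrix of \<open>g \<circ> P\<close>: it acts as
  \<open>g\<close> on \<open>R\<close>, and its entries are coordinate functionals of \<open>g\<close>.\<close>
definition ext_matrix :: "(real^'n \<Rightarrow> real^'n) \<Rightarrow> (real^'n \<Rightarrow> real^'n) \<Rightarrow> real^'n^'n" where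
  "ext_matrix P g = (\<chi> r c. g (P (axis c 1)) $ r)"

locale subspace_projection =
  fixes R :: "(real^'n) set" and P :: "real^'n \<Rightarrow> real^'n"
  assumes subspace_R: "subspace R" and linear_P: "linear P"
    and P_in: "P x \<in> R" and P_id: "x \<in> R \<Longrightarrow> P x = x"
begin

lemma ext_matrix_mult_vec:
  assumes "linear h" "x \<in> R"
  shows "ext_matrix P (restrict h R) *v x = h x"
proof -
  have "ext_matrix P (restrict h R) = matrix (h \<circ> P)"
    using P_in by (simp add: ext_matrix_def matrix_def)
  thus ?thesis
    using matrix_vector_mul(2)[OF linear_compose[OF linear_P assms(1)]] P_id[OF assms(2)]
    by (metis comp_apply)
qed

definition wedge_act :: "nat \<Rightarrow> (real^'n \<Rightarrow> real^'n) \<Rightarrow> ('n set \<Rightarrow> real) \<Rightarrow> ('n set \<Rightarrow> real)" where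
  "wedge_act i g = ext_map i (ext_matrix P g)"

lemma wedge_act_wedge_comb:
  assumes "linear h" "\<forall>J c. X J c \<in> R"
  shows "wedge_act i (restrict h R) (wedge_comb i a X) = wedge_comb i a (\<lambda>J c. h (X J c))"
  unfolding wedge_act_def ext_map_wedge_comb using ext_matrix_mult_vec assms by simp

lemma wedge_act_mult:
  assumes "g \<in> carrier (GLs R)" "g' \<in> carrier (GLs R)" "v \<in> wedge_combs i R"
  shows "wedge_act i (g \<otimes>\<^bsub>GLs R\<^esub> g') v = wedge_act i g (wedge_act i g' v)"
proof -
  obtain h where h: "linear h" "g = restrict h R" using assms(1) by (auto elim: GLs_carrierE)
  obtain h' where h': "linear h'" "bij_betw h' R R" "g' = restrict h' R"
    using assms(2) by (rule GLs_carrierE)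
  obtain a X where X: "\<forall>J c. X J c \<in> R" and v: "v = wedge_comb i a X"
    using assms(3) by (rule wedge_combsE)
  have mult: "g \<otimes>\<^bsub>GLs R\<^esub> g' = restrict (h \<circ> h') R"
  proof
    fix x show "(g \<otimes>\<^bsub>GLs R\<^esub> g') x = restrict (h \<circ> h') R x"
      using h(2) h'(2,3) by (cases "x \<in> R") (simp_all add: GLs_mult bij_betw_apply)
  qed
  have X': "\<forall>J c. h' (X J c) \<in> R" using X bij_betw_apply[OF h'(2)] by blast
  have "wedge_act i (g \<otimes>\<^bsub>GLs R\<^esub> g') v = wedge_comb i a (\<lambda>J c. (h \<circ> h') (X J c))"
    unfolding mult v by (rule wedge_act_wedge_comb[OF linear_compose[OF h'(1) h(1)] X])
  also have "\<dots> = wedge_act i g (wedge_comb i a (\<lambda>J c. h' (X J c)))"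
    unfolding h(2) wedge_act_wedge_comb[OF h(1) X'] by simp
  also have "wedge_comb i a (\<lambda>J c. h' (X J c)) = wedge_act i g' v"
    unfolding h'(3) v by (rule wedge_act_wedge_comb[OF h'(1) X, symmetric])
  finally show ?thesis .
qed

lemma wedge_act_one:
  assumes "v \<in> wedge_combs i R"
  shows "wedge_act i \<one>\<^bsub>GLs R\<^esub> v = v"
proof -
  obtain a X where X: "\<forall>J c. X J c \<in> R" and v: "v = wedge_comb i a X"
    using assms by (rule wedge_combsE)
  show ?thesis unfolding GLs_one v wedge_act_wedge_comb[OF linear_id X] by simp
qed

lemma wedge_act_matrix:
  assumes "v \<in> wedge_combs i R"
  shows "wedge_act i (restrict (\<lambda>x. M *v x) R) v = ext_map i M v"
proof -
  obtain a X where X: "\<forall>J c. X J c \<in> R" and v: "v = wedge_comb i a X"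
    using assms by (rule wedge_combsE)
  show ?thesis
    unfolding v wedge_act_wedge_comb[OF matrix_vector_mul_linear X] ext_map_wedge_comb ..
qed

lemma polyfun_wedge_act: "(\<lambda>g. \<Sum>I\<in>ext_idx i. w I * wedge_act i g v I) \<in> polyfun R"
proof -
  have "wedge_act i g v I
      = (\<Sum>J\<in>ext_idx i. v J * ldet i (\<lambda>r c. g (P (axis (ilist J ! c) 1)) $ (ilist I ! r)))"
    if "I \<in> ext_idx i" for g I
    using that by (simp add: wedge_act_def ext_map_def mv_def ext_pow_def ext_matrix_def mult.commute)
  hence "(\<lambda>g. \<Sum>I\<in>ext_idx i. w I * wedge_act i g v I) = (\<lambda>g. \<Sum>I\<in>ext_idx i. w I *
          (\<Sum>J\<in>ext_idx i. v J * ldet i (\<lambda>r c. g (P (axis (ilist J ! c) 1)) $ (ilist I ! r))))"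
    by (intro ext sum.cong refl) simp
  also have "\<dots> \<in> polyfun R"
    by (intro polyfun_sum polyfun_scale polyfun_ldet polyfun.coord P_in) (simp_all add: ext_idx_def)
  finally show ?thesis .
qed

lemma wedge_act_endomorphism_closed:
  assumes dense: "zariski_dense_GL R G" and V: "fsubspace (ext_idx i) V"
    and G_inv: "\<And>g v. g \<in> G \<Longrightarrow> v \<in> V \<Longrightarrow> wedge_act i g v \<in> V"
    and h: "linear h" "h ` R \<subseteq> R" and v: "v \<in> V"
  shows "wedge_act i (restrict h R) v \<in> V"
proof (rule fsubspace_memI_annihilator[OF V])
  show "wedge_act i (restrict h R) v \<in> fvecs (ext_idx i)"
    by (simp add: wedge_act_def ext_map_def mv_def fvecs_def)
  fix w assume w: "\<forall>u\<in>V. (\<Sum>I\<in>ext_idx i. w I * u I) = 0"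
  show "(\<Sum>I\<in>ext_idx i. w I * wedge_act i (restrict h R) v I) = 0"
    using zariski_dense_GL_vanishes_on_endomorphisms[OF subspace_R dense polyfun_wedge_act _ h]
      w G_inv v by blast
qed

lemma wedge_mem_if_endomorphism_invariant:
  assumes V: "fsubspace (ext_idx i) V" "V \<subseteq> wedge_combs i R" "V \<noteq> {\<lambda>_. 0}"
    and End_inv: "\<And>h v. linear h \<Longrightarrow> h ` R \<subseteq> R \<Longrightarrow> v \<in> V \<Longrightarrow> wedge_act i (restrict h R) v \<in> V"
    and x: "\<And>c. x c \<in> R"
  shows "wedge i x \<in> V"
proof -
  obtain v0 I0 where v0: "v0 \<in> V" and I0: "v0 I0 \<noteq> 0"
    using V(1,3) unfolding fsubspace_def by blast
  have "card I0 = i" using v0 I0 V(1) by (auto simp: fsubspace_def fvecs_def ext_idx_def)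
  obtain a X where X: "\<forall>J c. X J c \<in> R" and v0_eq: "v0 = wedge_comb i a X"
    using V(2) v0 by (blast elim: wedge_combsE)
  \<comment> \<open>A rank-one endomorphism of \<open>R\<close> sends \<open>v0\<close> to a multiple of \<open>wedge i x\<close>.\<close>
  define h where "h y = (\<Sum>s<i. (y $ (ilist I0 ! s)) *\<^sub>R x s)" for y
  have h: "linear h" "h ` R \<subseteq> R"
    using x subspace_R unfolding h_def
    by (auto simp: linear_iff scaleR_add_left sum.distrib scaleR_sum_right intro!: subspace_sum subspace_scale)
  have "wedge_act i (restrict h R) v0 = wedge_comb i a (\<lambda>J c. h (X J c))"
    unfolding v0_eq by (rule wedge_act_wedge_comb[OF h(1) X])
  also have "\<dots> = (\<lambda>I. v0 I0 * wedge i x I)"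
    unfolding h_def wedge_rank_one[OF \<open>card I0 = i\<close>] v0_eq wedge_comb_def
    by (simp add: sum_distrib_left algebra_simps)
  finally have "(\<lambda>I. (1 / v0 I0) * wedge_act i (restrict h R) v0 I) = wedge i x"
    using I0 by simp
  moreover have "(\<lambda>I. (1 / v0 I0) * wedge_act i (restrict h R) v0 I) \<in> V"
    using End_inv[OF h v0] V(1) unfolding fsubspace_def by blast
  ultimately show ?thesis by simp
qed

lemma wedge_act_generate_closed:
  assumes V: "V \<subseteq> wedge_combs i R" and S: "S \<subseteq> carrier (GLs R)"
    and S_pres: "\<And>s. s \<in> S \<Longrightarrow> wedge_act i s ` V = V"
    and g: "g \<in> generate (GLs R) S" and v: "v \<in> V"
  shows "wedge_act i g v \<in> V"
proof -
  interpret GL: group "GLs R" by (rule GLs_group[OF subspace_R])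
  have "wedge_act i g ` V = V"
  proof (rule GL.generate_preserves[OF _ _ S S_pres g])
    show "wedge_act i (g \<otimes>\<^bsub>GLs R\<^esub> h) v = wedge_act i g (wedge_act i h v)"
      if "g \<in> carrier (GLs R)" "h \<in> carrier (GLs R)" "v \<in> V" for g h v
      using wedge_act_mult[OF that(1,2)] that(3) V by blast
    show "wedge_act i \<one>\<^bsub>GLs R\<^esub> v = v" if "v \<in> V" for v
      using wedge_act_one that V by blast
  qed
  thus ?thesis using v by blast
qed

lemma wedge_combs_subset:
  assumes V: "fsubspace (ext_idx i) V" and wedges: "\<And>x. \<forall>c. x c \<in> R \<Longrightarrow> wedge i x \<in> V"
  shows "wedge_combs i R \<subseteq> V"
proof
  fix u assume "u \<in> wedge_combs i R"
  then obtain a X where X: "\<forall>J c. X J c \<in> R" and u: "u = wedge_comb i a X"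
    by (rule wedge_combsE)
  show "u \<in> V"
    unfolding u wedge_comb_def using X wedges
    by (intro fsubspace_sum[OF V]) (simp_all add: ext_idx_def)
qed

end

context rank_stable_tuple
begin

lemma irreducible_ext_pow_if_zariski_dense:
  assumes l: "l \<in> {1..m}" and dense: "zariski_dense_GL (Rg A l) (Ggrp m A l)"
  shows "irreducible_tuple (ext_idx i) m (\<lambda>j. ext_pow i (A j))"
  unfolding irreducible_tuple_def
proof
  let ?R = "Rg A l"
  assume "reducible_tuple (ext_idx i) m (\<lambda>j. ext_pow i (A j))"
  then obtain V where V_all: "\<forall>j\<in>{1..m}. fsubspace (ext_idx i) (V j) \<and> V j \<noteq> {\<lambda>_. 0}
        \<and> V j \<subset> mrange (ext_idx i) (ext_pow i (A j))"
    and V_inv: "\<forall>a\<in>{1..m}. \<forall>b\<in>{1..m}. ext_map i (A a) ` V b = V a"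
    unfolding reducible_tuple_def ext_map_def by blast
  have V: "fsubspace (ext_idx i) (V l)" "V l \<noteq> {\<lambda>_. 0}" "V l \<subset> mrange (ext_idx i) (ext_pow i (A l))"
    using V_all l by auto
  have range_combs: "mrange (ext_idx i) (ext_pow i (A l)) \<subseteq> wedge_combs i ?R"
    using mrange_ext_pow_subset_wedge_combs unfolding Rg_def .
  hence V_combs: "V l \<subseteq> wedge_combs i ?R" using V(3) by blast
  obtain P where P: "linear P" "\<And>x. P x \<in> ?R" "\<And>x. x \<in> ?R \<Longrightarrow> P x = x"
    using linear_exists_left_inverse_on[OF linear_id subspace_Rg[of A l] inj_on_id] by auto
  interpret subspace_projection ?R P
    using P(2,3) by (intro subspace_projection.intro subspace_Rg P(1)) auto
  have "wedge_act i s ` V l = V l" if s_in: "s \<in> word_auts m A l" for s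
  proof -
    obtain ws where ws: "set ws \<subseteq> {1..m}" and s: "s = word_aut A l ws"
      using s_in by (auto simp: word_auts_def)
    have "wedge_act i s ` V l = ext_map i (word A l ws) ` V l"
      unfolding s word_aut_def using V_combs wedge_act_matrix by (intro image_cong) auto
    also have "\<dots> = V l" using V_inv by (intro ext_map_word_image[OF _ l l ws]) blast
    finally show ?thesis .
  qed
  hence "wedge_act i g v \<in> V l" if "g \<in> Ggrp m A l" "v \<in> V l" for g v
    using wedge_act_generate_closed[OF V_combs word_auts_subset_GLs[OF l]] that
    unfolding Ggrp_eq_generate_word_auts by blast
  hence "wedge_act i (restrict h ?R) v \<in> V l" if "linear h" "h ` ?R \<subseteq> ?R" "v \<in> V l" for h v
    using wedge_act_endomorphism_closed[OF dense V(1) _ that] by blast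
  hence "wedge_combs i ?R \<subseteq> V l"
    using wedge_combs_subset[OF V(1)] wedge_mem_if_endomorphism_invariant[OF V(1) V_combs V(2)]
    by blast
  thus False using V(3) range_combs by blast
qed

end

theorem proposition2p10:
  fixes A :: "nat \<Rightarrow> real^'d^'d" and m k :: nat
  assumes "1 \<le> k" and "k \<le> CARD('d)"
    and rk: "\<forall>j\<in>{1..m}. rank (A j) = k"
    and rk2: "\<forall>a\<in>{1..m}. \<forall>b\<in>{1..m}. rank (A a ** A b) = k"
  shows "(\<forall>l\<in>{1..m}. \<forall>ws. set ws \<subseteq> {1..m} \<longrightarrow>
            linear (\<lambda>x. word A l ws *v x) \<and> bij_betw (\<lambda>x. word A l ws *v x) (Rg A l) (Rg A l))
    \<and> (\<forall>i\<in>{1..m}. \<forall>j\<in>{1..m}. \<exists>\<phi>. linear \<phi> \<and> bij_betw \<phi> (Rg A i) (Rg A j) \<and>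
            Ggrp m A j = (\<lambda>g. restrict (\<phi> \<circ> g \<circ> inv_into (Rg A i) \<phi>) (Rg A j)) ` Ggrp m A i)
    \<and> ((\<exists>l\<in>{1..m}. zariski_dense_GL (Rg A l) (Ggrp m A l)) \<longrightarrow>
         (\<forall>i\<in>{1..k}. irreducible_tuple (ext_idx i) m (\<lambda>j. ext_pow i (A j))))"
proof -
  interpret rank_stable_tuple A m k
    using rk rk2 by unfold_locales auto
  have "\<forall>l\<in>{1..m}. \<forall>ws. set ws \<subseteq> {1..m} \<longrightarrow>
            linear (\<lambda>x. word A l ws *v x) \<and> bij_betw (\<lambda>x. word A l ws *v x) (Rg A l) (Rg A l)"
    using word_bij_betw matrix_vector_mul_linear by blast
  moreover have "\<forall>i\<in>{1..m}. \<forall>j\<in>{1..m}. \<exists>\<phi>. linear \<phi> \<and> bij_betw \<phi> (Rg A i) (Rg A j) \<and>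
            Ggrp m A j = (\<lambda>g. restrict (\<phi> \<circ> g \<circ> inv_into (Rg A i) \<phi>) (Rg A j)) ` Ggrp m A i"
  proof (intro ballI exI[of _ "\<lambda>x. A j *v x" for j] conjI)
    fix i j assume "i \<in> {1..m}" "j \<in> {1..m}"
    thus "linear (\<lambda>x. A j *v x)" "bij_betw (\<lambda>x. A j *v x) (Rg A i) (Rg A j)"
      "Ggrp m A j = (\<lambda>g. restrict ((\<lambda>x. A j *v x) \<circ> g \<circ> inv_into (Rg A i) (\<lambda>x. A j *v x)) (Rg A j))
          ` Ggrp m A i"
      using matrix_vector_mul_linear mult_bij_betw Ggrp_conjugate unfolding conj_GL_def by blast+
  qed
  moreover have "(\<exists>l\<in>{1..m}. zariski_dense_GL (Rg A l) (Ggrp m A l)) \<longrightarrow>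
         (\<forall>i\<in>{1..k}. irreducible_tuple (ext_idx i) m (\<lambda>j. ext_pow i (A j)))"
    using irreducible_ext_pow_if_zariski_dense by blast
  ultimately show ?thesis by blast
qed

end
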